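(* Let $(A,+,\circ)$ be a left brace which has a transitive cycle base, let $g$ be an element of a transitive cycle base of $A$, and let $(A,\bullet)$ be the cycle set given by $a\bullet b:=\lambda_a(g)^{-}\circ b$ for all $a,b\in A$. Let $H:=\{h\in A\mid \lambda_h(g)=g\}$. Then $H$ is a subgroup of $(A,\circ)$, the retraction $\mathrm{Ret}(A,\bullet)$ coincides with the set $A/H$ of left cosets $a\circ H$ (i.e. $\sigma_a=\sigma_b$ in $(A,\bullet)$ if and only if $a^{-}\circ b\in H$), and $\mathrm{Soc}(A)\subseteq H$.
   Context: A left brace is a set $A$ with two operations such that $(A,+)$ is an abelian group, $(A,\circ)$ is a group, and $a\circ(b+c)=a\circ b-a+a\circ c$ for all $a,b,c$. For $a\in A$, $\lambda_a(b):=-a+a\circ b$; each $\lambda_a$ is an automorphism of $(A,+)$ and $a\mapsto\lambda_a$ is a homomorphism $(A,\circ)\to\mathrm{Aut}(A,+)$. $a^{-}$ denotes the inverse of $a$ in $(A,\circ)$. $\mathrm{Soc}(A):=\{a\in A\mid \lambda_a=\mathrm{id}_A\}$. A transitive cycle base is a subset of $A$ which is a single orbit of the action $\lambda$ of $(A,\circ)$ on $A$ and which generates $(A,+)$. A cycle set is a set $X$ with a binary operation such that each left multiplication $\sigma_x:y\mapsto x\cdot y$ is bijective and $(x\cdot y)\cdot(x\cdot z)=(y\cdot x)\cdot(y\cdot z)$; the retraction $\mathrm{Ret}(X)$ is the quotient of $X$ by the equivalence $x\sim y\iff\sigma_x=\sigma_y$. *)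

theory Defs
  imports Main
begin

text \<open>A left brace whose additive group is the type 'a (class ab_group_add, carrier UNIV)
  and whose multiplicative operation is circ.\<close>

definition is_group_op :: "('a \<Rightarrow> 'a \<Rightarrow> 'a) \<Rightarrow> bool" where
  "is_group_op circ \<longleftrightarrow>
     (\<forall>a b c. circ (circ a b) c = circ a (circ b c)) \<and>
     (\<exists>e. (\<forall>a. circ e a = a \<and> circ a e = a) \<and> (\<forall>a. \<exists>b. circ a b = e \<and> circ b a = e))"

definition left_brace :: "('a::ab_group_add \<Rightarrow> 'a \<Rightarrow> 'a) \<Rightarrow> bool" where
  "left_brace circ \<longleftrightarrow> is_group_op circ \<and>
     (\<forall>a b c. circ a (b + c) = circ a b - a + circ a c)"

definition circ_one :: "('a \<Rightarrow> 'a \<Rightarrow> 'a) \<Rightarrow> 'a" where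
  "circ_one circ = (THE e. \<forall>a. circ e a = a \<and> circ a e = a)"

definition circ_inv :: "('a \<Rightarrow> 'a \<Rightarrow> 'a) \<Rightarrow> 'a \<Rightarrow> 'a" where
  "circ_inv circ a = (THE b. circ a b = circ_one circ \<and> circ b a = circ_one circ)"

definition blambda :: "('a::ab_group_add \<Rightarrow> 'a \<Rightarrow> 'a) \<Rightarrow> 'a \<Rightarrow> 'a \<Rightarrow> 'a" where
  "blambda circ a b = - a + circ a b"

definition socle :: "('a::ab_group_add \<Rightarrow> 'a \<Rightarrow> 'a) \<Rightarrow> 'a set" where
  "socle circ = {a. blambda circ a = id}"

definition add_span :: "'a::ab_group_add set \<Rightarrow> 'a set" where
  "add_span X = \<Inter>{S. X \<subseteq> S \<and> 0 \<in> S \<and> (\<forall>x\<in>S. \<forall>y\<in>S. x + y \<in> S) \<and> (\<forall>x\<in>S. - x \<in> S)}"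

definition transitive_cycle_base :: "('a::ab_group_add \<Rightarrow> 'a \<Rightarrow> 'a) \<Rightarrow> 'a set \<Rightarrow> bool" where
  "transitive_cycle_base circ X \<longleftrightarrow>
     (\<exists>x. X = {blambda circ a x | a. True}) \<and> add_span X = UNIV"

definition is_subgroup_op :: "('a \<Rightarrow> 'a \<Rightarrow> 'a) \<Rightarrow> 'a set \<Rightarrow> bool" where
  "is_subgroup_op circ H \<longleftrightarrow> circ_one circ \<in> H \<and>
     (\<forall>x\<in>H. \<forall>y\<in>H. circ x y \<in> H) \<and> (\<forall>x\<in>H. circ_inv circ x \<in> H)"

text \<open>The cycle set operation a \<bullet> b = \<lambda>_a(g)^- \<circ> b; sigma_a = (\<lambda>b. a \<bullet> b).\<close>
definition cs_op :: "('a::ab_group_add \<Rightarrow> 'a \<Rightarrow> 'a) \<Rightarrow> 'a \<Rightarrow> 'a \<Rightarrow> 'a \<Rightarrow> 'a" where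
  "cs_op circ g a b = circ (circ_inv circ (blambda circ a g)) b"

end

(* The map a \<mapsto> \<lambda>_a is an action of (A,\<circ>) on A, so H is the stabilizer of g and
   \<lambda>_a(g) = \<lambda>_b(g) holds exactly when a and b lie in the same left coset of H.
   Since \<sigma>_a is left multiplication by \<lambda>_a(g)^-, it determines \<lambda>_a(g), which gives the
   description of the retraction; socle elements act trivially, so they fix g.
   None of this uses the hypothesis that g lies in a transitive cycle base. *)
theory Submission
  imports Defs
begin

locale brace =
  fixes circ :: "'a::ab_group_add \<Rightarrow> 'a \<Rightarrow> 'a"
  assumes left_brace: "left_brace circ"
begin

lemma circ_assoc: "circ (circ a b) c = circ a (circ b c)"
  using left_brace unfolding left_brace_def is_group_op_def by blast

lemma circ_add_distrib: "circ a (b + c) = circ a b - a + circ a c"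
  using left_brace unfolding left_brace_def by blast

lemma circ_one_neutral: "circ (circ_one circ) a = a \<and> circ a (circ_one circ) = a"
  and circ_one_invertible: "\<exists>b. circ a b = circ_one circ \<and> circ b a = circ_one circ"
proof -
  obtain e where e: "\<forall>a. circ e a = a \<and> circ a e = a" "\<forall>a. \<exists>b. circ a b = e \<and> circ b a = e"
    using left_brace unfolding left_brace_def is_group_op_def by blast
  have "circ_one circ = e"
    unfolding circ_one_def
  proof (rule the_equality)
    fix e' assume "\<forall>a. circ e' a = a \<and> circ a e' = a"
    then show "e' = e" using e(1) by metis
  qed (use e in blast)
  then show "circ (circ_one circ) a = a \<and> circ a (circ_one circ) = a"
    "\<exists>b. circ a b = circ_one circ \<and> circ b a = circ_one circ"
    using e by auto
qed

lemma circ_inv: "circ a (circ_inv circ a) = circ_one circ \<and> circ (circ_inv circ a) a = circ_one circ"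
proof -
  obtain b where b: "circ a b = circ_one circ \<and> circ b a = circ_one circ"
    using circ_one_invertible by blast
  have "circ_inv circ a = b"
    unfolding circ_inv_def
  proof (rule the_equality)
    fix b' assume b': "circ a b' = circ_one circ \<and> circ b' a = circ_one circ"
    have "b' = circ b' (circ a b)" using b circ_one_neutral by simp
    also have "\<dots> = circ (circ b' a) b" by (simp add: circ_assoc)
    also have "\<dots> = b" using b' circ_one_neutral by simp
    finally show "b' = b" .
  qed (fact b)
  then show ?thesis using b by simp
qed

lemma circ_right_cancel: "circ x z = circ y z \<Longrightarrow> x = y"
  by (metis circ_assoc circ_inv circ_one_neutral)

lemma circ_inv_inject: "circ_inv circ a = circ_inv circ b \<longleftrightarrow> a = b"
  by (metis circ_inv circ_right_cancel)

lemma circ_one_eq_zero: "circ_one circ = 0"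
  using circ_add_distrib[of "circ_one circ" 0 0] circ_one_neutral by simp

lemma circ_eq_add_blambda: "circ a x = a + blambda circ a x"
  unfolding blambda_def by simp

lemma blambda_add: "blambda circ a (x + y) = blambda circ a x + blambda circ a y"
  unfolding blambda_def using circ_add_distrib[of a x y] by (simp add: algebra_simps)

lemma blambda_circ: "blambda circ (circ a b) c = blambda circ a (blambda circ b c)"
proof -
  have "circ a (circ b c) = circ a b + blambda circ a (blambda circ b c)"
    by (metis circ_eq_add_blambda blambda_add add.assoc)
  then show ?thesis unfolding blambda_def by (simp add: circ_assoc algebra_simps)
qed

lemma blambda_one: "blambda circ (circ_one circ) x = x"
  unfolding blambda_def using circ_one_neutral circ_one_eq_zero by simp

lemma blambda_inv_blambda: "blambda circ (circ_inv circ a) (blambda circ a x) = x"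
  by (metis circ_inv blambda_circ blambda_one)

lemma blambda_blambda_inv: "blambda circ a (blambda circ (circ_inv circ a) x) = x"
  by (metis circ_inv blambda_circ blambda_one)

definition stabilizer :: "'a \<Rightarrow> 'a set" where
  "stabilizer g = {h. blambda circ h g = g}"

lemma is_subgroup_op_stabilizer: "is_subgroup_op circ (stabilizer g)"
  unfolding is_subgroup_op_def stabilizer_def
  by (auto simp: blambda_one blambda_circ) (metis blambda_inv_blambda)

lemma blambda_eq_iff_inv_circ_in_stabilizer:
  "blambda circ a g = blambda circ b g \<longleftrightarrow> circ (circ_inv circ a) b \<in> stabilizer g"
  unfolding stabilizer_def
  by (auto simp: blambda_circ) (metis blambda_inv_blambda, metis blambda_blambda_inv)

lemma cs_op_eq_iff_blambda_eq:
  "cs_op circ g a = cs_op circ g b \<longleftrightarrow> blambda circ a g = blambda circ b g"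
proof
  assume "cs_op circ g a = cs_op circ g b"
  then have "cs_op circ g a (circ_one circ) = cs_op circ g b (circ_one circ)"
    by simp
  then show "blambda circ a g = blambda circ b g"
    unfolding cs_op_def by (simp add: circ_one_neutral circ_inv_inject)
qed (simp add: cs_op_def fun_eq_iff)

lemma socle_subset_stabilizer: "socle circ \<subseteq> stabilizer g"
  unfolding socle_def stabilizer_def by auto

end

theorem mainTheorem1:
  fixes circ :: "'a::ab_group_add \<Rightarrow> 'a \<Rightarrow> 'a" and g :: 'a and X :: "'a set"
  assumes "left_brace circ"
    and "transitive_cycle_base circ X"
    and "g \<in> X"
  defines "H \<equiv> {h. blambda circ h g = g}"
  shows "is_subgroup_op circ H
    \<and> (\<forall>a b. cs_op circ g a = cs_op circ g b \<longleftrightarrow> circ (circ_inv circ a) b \<in> H)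
    \<and> socle circ \<subseteq> H"
proof -
  interpret brace circ by (fact brace.intro[OF assms(1)])
  have H: "H = stabilizer g"
    unfolding H_def stabilizer_def ..
  show ?thesis
    unfolding H
    using is_subgroup_op_stabilizer cs_op_eq_iff_blambda_eq
      blambda_eq_iff_inv_circ_in_stabilizer socle_subset_stabilizer
    by blast
qed

end
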